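(* Let $J\in M(n,\mathbb{R})$, $G=U(n)$, $G'=O(n)$, and let $L$ be a subgroup of $G$. Let $G_J:=\{g\in G: gJ=Jg\}$. If there exists $g\in G$ such that $\mathrm{Ad}(L)(\mathrm{Ad}(g)J)\cap M(n,\mathbb{R})=\emptyset$, then $LG'G_J\subsetneq G$.
   Context: $\mathrm{Ad}(g)J:=gJg^{-1}$ for $g\in U(n)$, and $\mathrm{Ad}(L)P:=\{\mathrm{Ad}(x)P:x\in L\}$. $LG'G_J=\{xyz:x\in L,y\in G',z\in G_J\}$. *)

theory Defs
  imports "HOL-Analysis.Analysis"
begin

definition adjoint_mat :: "complex^'n::finite^'n \<Rightarrow> complex^'n^'n" where
  "adjoint_mat A = transpose (map_matrix cnj A)"

definition unitary_group :: "(complex^'n::finite^'n) set" where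
  "unitary_group = {U. U ** adjoint_mat U = mat 1 \<and> adjoint_mat U ** U = mat 1}"

definition real_matrices :: "(complex^'n::finite^'n) set" where
  "real_matrices = {A. \<forall>i j. A $ i $ j \<in> \<real>}"

definition orthogonal_group :: "(complex^'n::finite^'n) set" where
  "orthogonal_group = map_matrix complex_of_real ` {Q :: real^'n^'n. orthogonal_matrix Q}"

definition Ad :: "complex^'n::finite^'n \<Rightarrow> complex^'n^'n \<Rightarrow> complex^'n^'n" where
  "Ad g A = g ** A ** matrix_inv g"

definition stabilizer_U :: "complex^'n::finite^'n \<Rightarrow> (complex^'n^'n) set" where
  "stabilizer_U J = {g \<in> unitary_group. g ** J = J ** g}"

definition subgroup_U :: "(complex^'n::finite^'n) set \<Rightarrow> bool" where
  "subgroup_U L \<longleftrightarrow> L \<subseteq> unitary_group \<and> mat 1 \<in> L \<and>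
     (\<forall>x\<in>L. \<forall>y\<in>L. x ** y \<in> L) \<and> (\<forall>x\<in>L. matrix_inv x \<in> L)"

end

theory Submission
  imports Defs
begin

text \<open>If \<open>g = x y z\<close> with \<open>x \<in> L\<close>, \<open>y \<in> O(n)\<close> and \<open>z \<in> G\<^sub>J\<close>, then
  \<open>Ad(x\<^sup>-\<^sup>1) (Ad(g) J) = Ad(y) (Ad(z) J) = y J y\<^sup>T\<close> is real, since \<open>z\<close> commutes with \<open>J\<close>
  and \<open>y\<close> is a real orthogonal matrix. Hence the element \<open>g\<close> of the hypothesis lies in
  \<open>U(n)\<close> but not in \<open>L O(n) G\<^sub>J\<close>, while \<open>L O(n) G\<^sub>J \<subseteq> U(n)\<close> because \<open>U(n)\<close> is closed
  under products.\<close>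

lemma adjoint_mat_mult:
  "adjoint_mat (A ** B) = adjoint_mat B ** adjoint_mat (A :: complex^'n::finite^'n)"
  by (simp add: adjoint_mat_def vec_eq_iff matrix_matrix_mult_def transpose_def map_matrix_def
      mult.commute)

lemma adjoint_mat_adjoint_mat [simp]:
  "adjoint_mat (adjoint_mat (A :: complex^'n::finite^'n)) = A"
  by (simp add: adjoint_mat_def vec_eq_iff transpose_def map_matrix_def)

lemma adjoint_mat_of_real:
  "adjoint_mat (map_matrix complex_of_real (A :: real^'n::finite^'n))
     = map_matrix complex_of_real (transpose A)"
  by (simp add: adjoint_mat_def vec_eq_iff transpose_def map_matrix_def)

lemma map_matrix_of_real_mult:
  "map_matrix complex_of_real (A ** B)
     = map_matrix complex_of_real A ** map_matrix complex_of_real (B :: real^'n::finite^'n)"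
  by (simp add: vec_eq_iff matrix_matrix_mult_def map_matrix_def)

lemma map_matrix_of_real_mat_1:
  "map_matrix complex_of_real (mat 1 :: real^'n::finite^'n) = mat 1"
  by (simp add: vec_eq_iff map_matrix_def mat_def)

lemma real_matrices_eq_range:
  "(real_matrices :: (complex^'n::finite^'n) set) = range (map_matrix complex_of_real)"
proof (intro set_eqI iffI)
  fix A :: "complex^'n^'n"
  assume "A \<in> real_matrices"
  then have "A = map_matrix complex_of_real (map_matrix Re A)"
    by (simp add: real_matrices_def vec_eq_iff map_matrix_def)
  then show "A \<in> range (map_matrix complex_of_real)" by blast
qed (auto simp: real_matrices_def)

lemma unitary_groupD:
  "U \<in> unitary_group \<Longrightarrow> U ** adjoint_mat U = mat 1"
  "U \<in> unitary_group \<Longrightarrow> adjoint_mat U ** U = mat 1"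
  by (simp_all add: unitary_group_def)

lemma matrix_inv_unitary:
  assumes "U \<in> unitary_group"
  shows "matrix_inv U = adjoint_mat (U :: complex^'n::finite^'n)"
proof -
  have "U ** matrix_inv U = mat 1 \<and> matrix_inv U ** U = mat 1"
    unfolding matrix_inv_def by (rule someI[of _ "adjoint_mat U"]) (simp add: unitary_groupD assms)
  then have "adjoint_mat U ** (U ** matrix_inv U) = adjoint_mat U" by simp
  then show ?thesis by (simp add: matrix_mul_assoc unitary_groupD assms)
qed

lemma unitary_group_mult:
  assumes "A \<in> unitary_group" "B \<in> unitary_group"
  shows "A ** B \<in> (unitary_group :: (complex^'n::finite^'n) set)"
proof -
  have "A ** B ** adjoint_mat (A ** B) = A ** (B ** adjoint_mat B) ** adjoint_mat A"
    and "adjoint_mat (A ** B) ** (A ** B) = adjoint_mat B ** (adjoint_mat A ** A) ** B"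
    by (simp_all add: adjoint_mat_mult matrix_mul_assoc)
  with unitary_groupD[OF assms(1)] unitary_groupD[OF assms(2)] show ?thesis
    by (simp add: unitary_group_def)
qed

lemma adjoint_mat_unitary_group:
  "U \<in> unitary_group \<Longrightarrow> adjoint_mat U \<in> unitary_group"
  by (simp add: unitary_group_def)

lemma orthogonal_group_subset_unitary_group:
  "(orthogonal_group :: (complex^'n::finite^'n) set) \<subseteq> unitary_group"
  by (auto simp: orthogonal_group_def orthogonal_matrix_def unitary_group_def adjoint_mat_of_real
      simp flip: map_matrix_of_real_mult map_matrix_of_real_mat_1)

lemma Ad_unitary:
  "U \<in> unitary_group \<Longrightarrow> Ad U A = U ** A ** adjoint_mat U"
  by (simp add: Ad_def matrix_inv_unitary)

lemma Ad_mult: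
  assumes "g \<in> unitary_group" "h \<in> unitary_group"
  shows "Ad (g ** h) A = Ad g (Ad h A)"
  using assms by (simp add: Ad_unitary unitary_group_mult adjoint_mat_mult matrix_mul_assoc)

lemma Ad_matrix_inv_Ad:
  assumes "x \<in> unitary_group"
  shows "Ad (matrix_inv x) (Ad x A) = A"
proof -
  have "matrix_inv (matrix_inv x) = x"
    using assms by (simp add: matrix_inv_unitary adjoint_mat_unitary_group)
  then have "Ad (matrix_inv x) (Ad x A) = (adjoint_mat x ** x) ** A ** (adjoint_mat x ** x)"
    using assms by (simp add: Ad_def matrix_inv_unitary matrix_mul_assoc)
  then show ?thesis
    using assms by (simp add: unitary_groupD)
qed

lemma Ad_stabilizer_U:
  assumes "z \<in> stabilizer_U J"
  shows "Ad z J = J"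
proof -
  have z: "z \<in> unitary_group" "z ** J = J ** z"
    using assms by (simp_all add: stabilizer_U_def)
  then have "Ad z J = J ** (z ** adjoint_mat z)"
    by (simp add: Ad_unitary matrix_mul_assoc)
  then show ?thesis
    using z by (simp add: unitary_groupD)
qed

lemma Ad_orthogonal_group_real_matrices:
  assumes "y \<in> orthogonal_group" "A \<in> real_matrices"
  shows "Ad y A \<in> real_matrices"
proof -
  obtain Q where Q: "orthogonal_matrix Q" "y = map_matrix complex_of_real Q"
    using assms(1) by (auto simp: orthogonal_group_def)
  obtain A0 where A0: "A = map_matrix complex_of_real A0"
    using assms(2) by (auto simp: real_matrices_eq_range)
  have "Ad y A = map_matrix complex_of_real (Q ** A0 ** transpose Q)"
    using assms(1) orthogonal_group_subset_unitary_group
    by (auto simp: Ad_unitary Q A0 adjoint_mat_of_real map_matrix_of_real_mult)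
  then show ?thesis
    by (simp add: real_matrices_eq_range)
qed

lemma Ad_conj_product_real_matrices:
  assumes "x \<in> unitary_group" "y \<in> orthogonal_group" "z \<in> stabilizer_U J"
    and "J \<in> real_matrices"
  shows "Ad (matrix_inv x) (Ad (x ** y ** z) J) \<in> real_matrices"
proof -
  have "y \<in> unitary_group" "z \<in> unitary_group"
    using assms(2,3) orthogonal_group_subset_unitary_group by (auto simp: stabilizer_U_def)
  then have "Ad (matrix_inv x) (Ad (x ** y ** z) J) = Ad y (Ad z J)"
    using assms(1) by (simp add: Ad_mult unitary_group_mult Ad_matrix_inv_Ad)
  also have "\<dots> = Ad y J"
    using assms(3) by (simp add: Ad_stabilizer_U)
  finally show ?thesis
    using assms(2,4) by (simp add: Ad_orthogonal_group_real_matrices)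
qed

theorem lemma6p1:
  fixes J0 :: "real^'n::finite^'n"
    and L :: "(complex^'n^'n) set"
  defines "J \<equiv> map_matrix complex_of_real J0"
  assumes "subgroup_U L"
    and "\<exists>g\<in>unitary_group. (\<lambda>x. Ad x (Ad g J)) ` L \<inter> real_matrices = {}"
  shows "{x ** y ** z | x y z. x \<in> L \<and> y \<in> orthogonal_group \<and> z \<in> stabilizer_U J}
           \<subset> unitary_group"
proof -
  have L: "L \<subseteq> unitary_group" "\<forall>x\<in>L. matrix_inv x \<in> L"
    using assms(2) by (auto simp: subgroup_U_def)
  have "J \<in> real_matrices"
    by (simp add: J_def real_matrices_eq_range)
  obtain g where g: "g \<in> unitary_group" "(\<lambda>x. Ad x (Ad g J)) ` L \<inter> real_matrices = {}"
    using assms(3) by blast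
  have "g \<notin> {x ** y ** z | x y z. x \<in> L \<and> y \<in> orthogonal_group \<and> z \<in> stabilizer_U J}"
  proof
    assume "g \<in> {x ** y ** z | x y z. x \<in> L \<and> y \<in> orthogonal_group \<and> z \<in> stabilizer_U J}"
    then obtain x y z where "g = x ** y ** z" "x \<in> L" "y \<in> orthogonal_group" "z \<in> stabilizer_U J"
      by blast
    then have "matrix_inv x \<in> L" "Ad (matrix_inv x) (Ad g J) \<in> real_matrices"
      using L \<open>J \<in> real_matrices\<close> by (auto intro: Ad_conj_product_real_matrices)
    then show False
      using g(2) by blast
  qed
  moreover have "{x ** y ** z | x y z. x \<in> L \<and> y \<in> orthogonal_group \<and> z \<in> stabilizer_U J}
      \<subseteq> unitary_group"
    using L(1) orthogonal_group_subset_unitary_group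
    by (auto intro!: unitary_group_mult simp: stabilizer_U_def)
  ultimately show ?thesis
    using g(1) by blast
qed

end
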